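(* Let $(X_n)_{n\ge1}$ be real random variables with densities $(p_n)_{n\ge1}$, $\mathbb{E}X_n=0$, $\mathrm{Var}(X_n)=1$ for all $n$, and $\sup_n\mathbb{E}|X_n|^s<\infty$ for some $s>2$. Suppose one of the following holds: (1) there is $q\in(2,\infty]$ with $\sup_n\|p_n-\phi\|_q<\infty$; (2) $\limsup_n\|p_n\|_2\le\|\phi\|_2$. Then the following are equivalent: (i) $\|p_n-\phi\|_1\to0$; (ii) $\|p_n-\phi\|_2\to0$; (iii) $\mathrm{KL}(X_n\|G)\to0$, as $n\to\infty$.
   Context: $\phi(x)=(2\pi)^{-1/2}e^{-x^2/2}$ is the density of a standard Gaussian random variable $G$; $\mathrm{KL}(X_n\|G)=\int p_n\ln(p_n/\phi)$; $\|\cdot\|_q$ is the $L^q(\mathbb{R})$ norm. *)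

theory Defs
  imports "HOL-Probability.Probability"
begin

abbreviation phi :: "real \<Rightarrow> real" where "phi \<equiv> std_normal_density"

definition is_density :: "(real \<Rightarrow> real) \<Rightarrow> bool" where
  "is_density p \<longleftrightarrow> p \<in> borel_measurable lborel \<and> (\<forall>x. 0 \<le> p x)
     \<and> (\<integral>\<^sup>+ x. ennreal (p x) \<partial>lborel) = 1"

definition Lq_pow :: "real \<Rightarrow> (real \<Rightarrow> real) \<Rightarrow> ennreal" where
  "Lq_pow q f = (\<integral>\<^sup>+ x. ennreal (\<bar>f x\<bar> powr q) \<partial>lborel)"

definition Linf_le :: "(real \<Rightarrow> real) \<Rightarrow> real \<Rightarrow> bool" where
  "Linf_le f C \<longleftrightarrow> (AE x in lborel. \<bar>f x\<bar> \<le> C)"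

text \<open>KL(p || G) = integral of p ln(p/phi), valued in (-\<infinity>,\<infinity>]; it is +\<infinity> when
  p ln(p/phi) is not Lebesgue integrable (its negative part is always integrable
  for densities with finite second moment, so this is the standard value).\<close>
definition KL_gauss :: "(real \<Rightarrow> real) \<Rightarrow> ereal" where
  "KL_gauss p = (if integrable lborel (\<lambda>x. p x * ln (p x / phi x))
                 then ereal (\<integral>x. p x * ln (p x / phi x) \<partial>lborel) else \<infinity>)"

end

theory Submission
  imports Defs
begin

text \<open>
  Write \<open>\<delta> = p - \<phi>\<close>. Adding \<open>\<phi> - p\<close>, which integrates to \<open>0\<close>, to the integrand of
  \<open>KL(p \<parallel> G)\<close> gives the pointwise nonnegative integrand \<open>p ln (p / \<phi>) - p + \<phi>\<close>
  (\<open>kl_term\<close> below), so the divergence becomes a Lebesgue integral of a nonnegative function.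
  Each implication is then a pointwise inequality integrated over the line, split at a radius
  \<open>R\<close>: on \<open>[-R, R]\<close> the Gaussian is bounded below by \<open>\<phi> R\<close>, which makes \<open>L\<^sup>1\<close>, \<open>L\<^sup>2\<close>
  and KL comparable there (AM-GM, \<open>KL \<le> \<chi>\<^sup>2\<close>, and Pinsker through the Hellinger distance),
  while outside \<open>[-R, R]\<close> the mass is uniformly small by the bounded second resp. \<open>s\<close>-th
  moments. This gives \<open>\<parallel>\<delta>\<parallel>\<^sub>2 \<rightarrow> 0 \<Longrightarrow> KL \<rightarrow> 0 \<Longrightarrow> \<parallel>\<delta>\<parallel>\<^sub>1 \<rightarrow> 0\<close> and
  \<open>\<parallel>\<delta>\<parallel>\<^sub>2 \<rightarrow> 0 \<Longrightarrow> \<parallel>\<delta>\<parallel>\<^sub>1 \<rightarrow> 0\<close>. The converse \<open>\<parallel>\<delta>\<parallel>\<^sub>1 \<rightarrow> 0 \<Longrightarrow> \<parallel>\<delta>\<parallel>\<^sub>2 \<rightarrow> 0\<close> needs the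
  extra hypothesis: interpolation against a uniform \<open>L\<^sup>q\<close> or \<open>L\<^sup>\<infinity>\<close> bound, or
  \<open>\<parallel>\<delta>\<parallel>\<^sub>2\<^sup>2 + \<parallel>\<phi>\<parallel>\<^sub>2\<^sup>2 \<le> \<parallel>p\<parallel>\<^sub>2\<^sup>2 + 2 \<parallel>\<delta>\<parallel>\<^sub>1\<close> (from \<open>\<phi> \<le> 1\<close>) under the limsup condition.
\<close>

section \<open>Elementary inequalities\<close>

lemma mult_le_square_div_add:
  fixes x y e :: real
  assumes "0 < e"
  shows "x * y \<le> x\<^sup>2 / (2 * e) + e * y\<^sup>2 / 2"
proof -
  have "0 \<le> (x - e * y)\<^sup>2 / (2 * e)"
    using assms by simp
  also have "\<dots> = x\<^sup>2 / (2 * e) + e * y\<^sup>2 / 2 - x * y"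
    using assms by (simp add: field_simps power2_eq_square)
  finally show ?thesis
    by simp
qed

lemma power2_le_powr_if_ge:
  fixes y M q :: real
  assumes "0 < M" "M \<le> \<bar>y\<bar>" "2 \<le> q"
  shows "y\<^sup>2 \<le> M powr (2 - q) * \<bar>y\<bar> powr q"
proof -
  have "1 = M powr (2 - q) * M powr (q - 2)"
    using assms by (simp add: powr_add[symmetric])
  also have "\<dots> \<le> M powr (2 - q) * \<bar>y\<bar> powr (q - 2)"
    using assms by (intro mult_left_mono powr_mono2) auto
  finally have "y\<^sup>2 * 1 \<le> y\<^sup>2 * (M powr (2 - q) * \<bar>y\<bar> powr (q - 2))"
    by (intro mult_left_mono) auto
  also have "\<dots> = M powr (2 - q) * (y\<^sup>2 * \<bar>y\<bar> powr (q - 2))"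
    by simp
  also have "y\<^sup>2 * \<bar>y\<bar> powr (q - 2) = \<bar>y\<bar> powr q"
    using powr_add[of "\<bar>y\<bar>" 2 "q - 2"] by simp
  finally show ?thesis
    by simp
qed

definition kl_term :: "real \<Rightarrow> real \<Rightarrow> real" where
  "kl_term a b = a * ln (a / b) - a + b"

lemma kl_term_nonneg:
  assumes "0 \<le> a" "0 < b"
  shows "0 \<le> kl_term a b"
proof (cases "a = 0")
  case False
  then have "ln (b / a) \<le> b / a - 1"
    using assms by (intro ln_le_minus_one) simp
  then have "a * (1 - b / a) \<le> a * ln (a / b)"
    using assms False by (intro mult_left_mono) (auto simp: ln_div)
  moreover have "a * (1 - b / a) = a - b"
    using False by (simp add: field_simps)
  ultimately show ?thesis
    by (simp add: kl_term_def)
qed (use assms in \<open>simp add: kl_term_def\<close>)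

lemma kl_term_le_chi_square:
  assumes "0 \<le> a" "0 < b"
  shows "kl_term a b \<le> (a - b)\<^sup>2 / b"
proof (cases "a = 0")
  case False
  then have "a * ln (a / b) \<le> a * (a / b - 1)"
    using assms by (intro mult_left_mono ln_le_minus_one) auto
  then show ?thesis
    using assms by (simp add: kl_term_def field_simps power2_eq_square)
qed (use assms in \<open>simp add: kl_term_def power2_eq_square\<close>)

lemma hellinger_le_kl_term:
  assumes "0 \<le> a" "0 < b"
  shows "(sqrt a - sqrt b)\<^sup>2 \<le> kl_term a b"
proof -
  define u v where "u = sqrt a" and "v = sqrt b"
  have uv: "0 \<le> u" "0 < v" "a = u\<^sup>2" "b = v\<^sup>2"
    using assms by (auto simp: u_def v_def)
  have "u * ln (a / b) = 2 * u * ln (u / v)"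
    using uv by (cases "u = 0") (simp_all add: power_divide[symmetric] ln_realpow)
  then have "kl_term a b - (u - v)\<^sup>2 = 2 * u * kl_term u v"
    using uv by (simp add: kl_term_def algebra_simps power2_eq_square)
  moreover have "0 \<le> 2 * u * kl_term u v"
    using uv kl_term_nonneg[of u v] by simp
  ultimately show ?thesis
    by (simp add: u_def v_def)
qed

lemma abs_diff_le_kl_term:
  assumes "0 \<le> a" "0 < b" "0 < e"
  shows "\<bar>a - b\<bar> \<le> kl_term a b / (2 * e) + e * (a + b)"
proof -
  have "a - b = (sqrt a - sqrt b) * (sqrt a + sqrt b)"
    using assms by (simp add: algebra_simps)
  then have "\<bar>a - b\<bar> = \<bar>sqrt a - sqrt b\<bar> * (sqrt a + sqrt b)"
    using assms by (simp add: abs_mult)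
  also have "\<dots> \<le> (sqrt a - sqrt b)\<^sup>2 / (2 * e) + e * (sqrt a + sqrt b)\<^sup>2 / 2"
    using mult_le_square_div_add[OF \<open>0 < e\<close>, of "\<bar>sqrt a - sqrt b\<bar>"] by simp
  also have "\<dots> \<le> kl_term a b / (2 * e) + e * (a + b)"
  proof (rule add_mono)
    show "(sqrt a - sqrt b)\<^sup>2 / (2 * e) \<le> kl_term a b / (2 * e)"
      using hellinger_le_kl_term[OF assms(1,2)] \<open>0 < e\<close> by (simp add: divide_right_mono)
    have "(sqrt a + sqrt b)\<^sup>2 \<le> 2 * (a + b)"
      using assms sum_squares_ge_zero[of "sqrt a - sqrt b" 0]
      by (simp add: power2_eq_square algebra_simps)
    then show "e * (sqrt a + sqrt b)\<^sup>2 / 2 \<le> e * (a + b)"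
      using \<open>0 < e\<close> by simp
  qed
  finally show ?thesis .
qed

lemma borel_measurable_kl_term[measurable]:
  assumes [measurable]: "f \<in> borel_measurable M" "g \<in> borel_measurable M"
  shows "(\<lambda>x. kl_term (f x) (g x)) \<in> borel_measurable M"
  unfolding kl_term_def by measurable

section \<open>Pointwise bounds involving the standard Gaussian density\<close>

lemma std_normal_density_pos: "0 < phi x"
  by (simp add: normal_density_pos)

lemma std_normal_density_le_1: "phi x \<le> 1"
proof -
  have "exp (- x\<^sup>2 / 2) \<le> 1" "1 \<le> sqrt (2 * pi)"
    using pi_gt3 by simp_all
  then have "exp (- x\<^sup>2 / 2) \<le> sqrt (2 * pi)"
    by linarith
  then show ?thesis
    unfolding std_normal_density_def by (simp add: field_simps)
qed

lemma std_normal_density_mono: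
  assumes "\<bar>x\<bar> \<le> \<bar>y\<bar>"
  shows "phi y \<le> phi x"
proof -
  have "x\<^sup>2 \<le> y\<^sup>2"
    using assms by (simp add: abs_le_square_iff)
  then show ?thesis
    unfolding std_normal_density_def by (simp add: divide_right_mono)
qed

lemma nn_integral_std_normal_density: "(\<integral>\<^sup>+x. phi x \<partial>lborel) = 1"
  by (subst nn_integral_eq_integral) auto

lemma nn_integral_std_normal_second_moment: "(\<integral>\<^sup>+x. ennreal (x\<^sup>2 * phi x) \<partial>lborel) = 1"
proof -
  have "has_bochner_integral lborel (\<lambda>x. x\<^sup>2 * phi x) 1"
    using std_normal_moment_even[of 1] by (simp add: mult.commute)
  then show ?thesis
    by (subst nn_integral_eq_integral) (auto simp: has_bochner_integral_iff)
qed

lemma kl_term_std_normal_le: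
  assumes "0 \<le> a"
  shows "kl_term a (phi x) \<le> a\<^sup>2 + a * x\<^sup>2 / 2 + phi x"
proof (cases "a = 0")
  case False
  have "sqrt (2 * pi) \<le> sqrt (3\<^sup>2)"
    using pi_less_4 by (intro real_sqrt_le_mono) simp
  then have "ln (sqrt (2 * pi)) \<le> 2"
    using ln_le_minus_one[of "sqrt (2 * pi)"] by simp
  moreover have "ln (a / phi x) = ln a + ln (sqrt (2 * pi)) + x\<^sup>2 / 2"
    using assms False std_normal_density_pos[of x]
    by (simp add: ln_div ln_mult std_normal_density_def)
  moreover have "ln a \<le> a - 1"
    using assms False by (intro ln_le_minus_one) simp
  ultimately have "a * ln (a / phi x) \<le> a * (a + 1 + x\<^sup>2 / 2)"
    using assms by (intro mult_left_mono) auto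
  then show ?thesis
    by (simp add: kl_term_def algebra_simps power2_eq_square)
qed (simp add: kl_term_def)

lemma kl_term_std_normal_le_tail:
  assumes "0 \<le> a" "0 < R" "R \<le> \<bar>x\<bar>" "2 \<le> s"
  shows "kl_term a (phi x) \<le> 2 * (a - phi x)\<^sup>2 + 3 / R\<^sup>2 * (x\<^sup>2 * phi x)
    + R powr (2 - s) / 2 * (\<bar>x\<bar> powr s * a)"
proof -
  have "1 \<le> x\<^sup>2 / R\<^sup>2"
    using assms(2,3) abs_le_square_iff[of R x] by simp
  then have "phi x \<le> x\<^sup>2 / R\<^sup>2 * phi x"
    using std_normal_density_pos[of x] mult_right_mono[of 1 "x\<^sup>2 / R\<^sup>2" "phi x"] by simp
  moreover have "3 / R\<^sup>2 * (x\<^sup>2 * phi x) = 3 * (x\<^sup>2 / R\<^sup>2 * phi x)"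
    by simp
  ultimately have "3 * phi x \<le> 3 / R\<^sup>2 * (x\<^sup>2 * phi x)"
    by linarith
  moreover have "a * x\<^sup>2 / 2 \<le> R powr (2 - s) / 2 * (\<bar>x\<bar> powr s * a)"
  proof -
    have "a * x\<^sup>2 \<le> a * (R powr (2 - s) * \<bar>x\<bar> powr s)"
      using assms power2_le_powr_if_ge[of R x s] by (intro mult_left_mono) auto
    then show ?thesis
      by (simp add: ac_simps)
  qed
  moreover have "a\<^sup>2 \<le> 2 * (a - phi x)\<^sup>2 + 2 * phi x"
  proof -
    have "(phi x)\<^sup>2 \<le> phi x"
      using std_normal_density_le_1[of x] std_normal_density_pos[of x]
      by (simp add: power2_eq_square mult_left_le)
    moreover have "a\<^sup>2 \<le> 2 * (a - phi x)\<^sup>2 + 2 * (phi x)\<^sup>2"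
      using sum_squares_ge_zero[of "a - 2 * phi x" 0] by (simp add: power2_eq_square algebra_simps)
    ultimately show ?thesis
      by linarith
  qed
  ultimately show ?thesis
    using kl_term_std_normal_le[OF assms(1), of x] by linarith
qed

lemma kl_term_std_normal_le_split:
  assumes "0 \<le> a" "0 < R" "2 \<le> s"
  shows "kl_term a (phi x) \<le> (1 / phi R + 2) * (a - phi x)\<^sup>2 + 3 / R\<^sup>2 * (x\<^sup>2 * phi x)
    + R powr (2 - s) / 2 * (\<bar>x\<bar> powr s * a)"
proof (cases "\<bar>x\<bar> \<le> R")
  case True
  have "kl_term a (phi x) \<le> (a - phi x)\<^sup>2 / phi x"
    using assms(1) std_normal_density_pos by (rule kl_term_le_chi_square)
  also have "\<dots> \<le> (a - phi x)\<^sup>2 / phi R"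
    using True assms(2) std_normal_density_mono[of x R] std_normal_density_pos[of R]
    by (intro divide_left_mono) auto
  also have "\<dots> \<le> (1 / phi R + 2) * (a - phi x)\<^sup>2"
    by (simp add: field_simps)
  finally show ?thesis
    using assms(1) std_normal_density_pos[of x] by (simp add: add_increasing2)
next
  case False
  then have "kl_term a (phi x) \<le> 2 * (a - phi x)\<^sup>2 + 3 / R\<^sup>2 * (x\<^sup>2 * phi x)
      + R powr (2 - s) / 2 * (\<bar>x\<bar> powr s * a)"
    using assms by (intro kl_term_std_normal_le_tail) auto
  moreover have "0 \<le> 1 / phi R * (a - phi x)\<^sup>2"
    using std_normal_density_pos[of R] by simp
  moreover have "(1 / phi R + 2) * (a - phi x)\<^sup>2 = 1 / phi R * (a - phi x)\<^sup>2 + 2 * (a - phi x)\<^sup>2"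
    by (simp add: distrib_right)
  ultimately show ?thesis
    by linarith
qed

lemma abs_diff_std_normal_le:
  assumes "0 \<le> a" "0 < R" "0 < d"
  shows "\<bar>a - phi x\<bar> \<le> 1 / (2 * d) * (a - phi x)\<^sup>2 + d / (2 * phi R) * phi x
    + 1 / R\<^sup>2 * (x\<^sup>2 * (a + phi x))"
proof (cases "\<bar>x\<bar> \<le> R")
  case True
  have "\<bar>a - phi x\<bar> \<le> 1 / (2 * d) * (a - phi x)\<^sup>2 + d / 2"
    using mult_le_square_div_add[OF assms(3), of "\<bar>a - phi x\<bar>" 1] by simp
  moreover have "d / 2 \<le> d / (2 * phi R) * phi x"
    using True assms std_normal_density_mono[of x R] std_normal_density_pos[of R]
    by (simp add: field_simps)
  moreover have "0 \<le> 1 / R\<^sup>2 * (x\<^sup>2 * (a + phi x))"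
    using assms(1) std_normal_density_pos[of x] by simp
  ultimately show ?thesis
    by linarith
next
  case False
  then have "1 \<le> x\<^sup>2 / R\<^sup>2"
    using assms(2) abs_le_square_iff[of R x] by simp
  then have "a + phi x \<le> 1 / R\<^sup>2 * (x\<^sup>2 * (a + phi x))"
    using assms(1) std_normal_density_pos[of x] mult_right_mono[of 1 "x\<^sup>2 / R\<^sup>2" "a + phi x"] by simp
  moreover have "\<bar>a - phi x\<bar> \<le> a + phi x"
    using assms(1) std_normal_density_pos[of x] by (simp add: abs_le_iff)
  moreover have "0 \<le> 1 / (2 * d) * (a - phi x)\<^sup>2 + d / (2 * phi R) * phi x"
    using assms(3) std_normal_density_pos[of R] std_normal_density_pos[of x] by simp
  ultimately show ?thesis
    by linarith
qed

section \<open>Integral inequalities\<close>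

lemma nn_integral_le_lincomb3:
  fixes f g h k :: "'a \<Rightarrow> real"
  assumes [measurable]: "g \<in> borel_measurable M" "h \<in> borel_measurable M" "k \<in> borel_measurable M"
    and "\<And>x. 0 \<le> g x" "\<And>x. 0 \<le> h x" "\<And>x. 0 \<le> k x" "0 \<le> a" "0 \<le> b" "0 \<le> c"
    and "AE x in M. f x \<le> a * g x + b * h x + c * k x"
  shows "(\<integral>\<^sup>+x. f x \<partial>M)
    \<le> a * (\<integral>\<^sup>+x. g x \<partial>M) + b * (\<integral>\<^sup>+x. h x \<partial>M) + c * (\<integral>\<^sup>+x. k x \<partial>M)"
proof -
  have "(\<integral>\<^sup>+x. f x \<partial>M) \<le> (\<integral>\<^sup>+x. ennreal a * g x + ennreal b * h x + ennreal c * k x \<partial>M)"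
    using assms(10)
  proof (rule nn_integral_mono_AE[OF eventually_mono])
    fix x
    assume "f x \<le> a * g x + b * h x + c * k x"
    then show "ennreal (f x) \<le> ennreal a * g x + ennreal b * h x + ennreal c * k x"
      using assms(4-9) by (simp add: ennreal_leI ennreal_mult[symmetric] ennreal_plus[symmetric] del: ennreal_plus)
  qed
  also have "\<dots> = a * (\<integral>\<^sup>+x. g x \<partial>M) + b * (\<integral>\<^sup>+x. h x \<partial>M) + c * (\<integral>\<^sup>+x. k x \<partial>M)"
    by (simp add: nn_integral_add nn_integral_cmult)
  finally show ?thesis .
qed

lemma nn_integral_le_lincomb2:
  fixes f g h :: "'a \<Rightarrow> real"
  assumes "g \<in> borel_measurable M" "h \<in> borel_measurable M"
    and "\<And>x. 0 \<le> g x" "\<And>x. 0 \<le> h x" "0 \<le> a" "0 \<le> b"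
    and "AE x in M. f x \<le> a * g x + b * h x"
  shows "(\<integral>\<^sup>+x. f x \<partial>M) \<le> a * (\<integral>\<^sup>+x. g x \<partial>M) + b * (\<integral>\<^sup>+x. h x \<partial>M)"
  using nn_integral_le_lincomb3[of g M h "\<lambda>_. 0" a b 0 f] assms by simp

lemma Lq_pow_1: "Lq_pow 1 f = (\<integral>\<^sup>+x. \<bar>f x\<bar> \<partial>lborel)"
  by (simp add: Lq_pow_def)

lemma Lq_pow_2: "Lq_pow 2 f = (\<integral>\<^sup>+x. (f x)\<^sup>2 \<partial>lborel)"
  by (simp add: Lq_pow_def)

lemma Lq_pow_2_std_normal_density_le_1: "Lq_pow 2 phi \<le> 1"
proof -
  have "Lq_pow 2 phi \<le> (\<integral>\<^sup>+x. phi x \<partial>lborel)"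
    unfolding Lq_pow_2 using std_normal_density_le_1 std_normal_density_pos
    by (intro nn_integral_mono ennreal_leI) (simp add: power2_eq_square mult_left_le less_imp_le)
  then show ?thesis
    by (simp add: nn_integral_std_normal_density)
qed

lemma Lq_pow_2_le_Lq_pow_1_Lq_pow:
  fixes f :: "real \<Rightarrow> real"
  assumes [measurable]: "f \<in> borel_measurable lborel"
    and "0 < M" "2 \<le> q" "Lq_pow q f \<le> ennreal C" "0 \<le> C"
  shows "Lq_pow 2 f \<le> ennreal M * Lq_pow 1 f + ennreal (M powr (2 - q) * C)"
proof -
  have "(f x)\<^sup>2 \<le> M * \<bar>f x\<bar> + M powr (2 - q) * \<bar>f x\<bar> powr q" for x
  proof (cases "\<bar>f x\<bar> \<le> M")
    case True
    then have "\<bar>f x\<bar> * \<bar>f x\<bar> \<le> M * \<bar>f x\<bar>"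
      by (intro mult_right_mono) auto
    then show ?thesis
      by (simp add: power2_eq_square add_increasing2)
  next
    case False
    then show ?thesis
      using power2_le_powr_if_ge[of M "f x" q] assms(2,3) by (simp add: add_increasing)
  qed
  then have "Lq_pow 2 f \<le> ennreal M * Lq_pow 1 f + ennreal (M powr (2 - q)) * Lq_pow q f"
    unfolding Lq_pow_1 Lq_pow_2 Lq_pow_def[of q] using assms(2)
    by (intro nn_integral_le_lincomb2) auto
  also have "\<dots> \<le> ennreal M * Lq_pow 1 f + ennreal (M powr (2 - q)) * ennreal C"
    using assms(4) by (simp add: mult_left_mono)
  finally show ?thesis
    using assms(5) by (simp add: ennreal_mult)
qed

lemma Lq_pow_2_le_Lq_pow_1_Linf:
  fixes f :: "real \<Rightarrow> real"
  assumes [measurable]: "f \<in> borel_measurable lborel" and "Linf_le f C"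
  shows "Lq_pow 2 f \<le> ennreal C * Lq_pow 1 f"
proof -
  have "AE x in lborel. (f x)\<^sup>2 \<le> C * \<bar>f x\<bar>"
    using assms(2) unfolding Linf_le_def
    by eventually_elim (metis abs_ge_zero abs_mult_self_eq mult_right_mono power2_eq_square)
  then have "Lq_pow 2 f \<le> (\<integral>\<^sup>+x. ennreal C * \<bar>f x\<bar> \<partial>lborel)"
    unfolding Lq_pow_2
    by (rule nn_integral_mono_AE[OF eventually_mono]) (simp add: ennreal_leI ennreal_mult''[symmetric])
  then show ?thesis
    by (simp add: Lq_pow_1 nn_integral_cmult)
qed

lemma Lq_pow_2_diff_std_normal_le:
  assumes [measurable]: "p \<in> borel_measurable lborel"
  shows "Lq_pow 2 (\<lambda>x. p x - phi x) + Lq_pow 2 phi \<le> Lq_pow 2 p + 2 * Lq_pow 1 (\<lambda>x. p x - phi x)"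
proof -
  have pointwise: "(p x - phi x)\<^sup>2 + (phi x)\<^sup>2 \<le> 1 * (p x)\<^sup>2 + 2 * \<bar>p x - phi x\<bar>" for x
  proof -
    have "(p x - phi x)\<^sup>2 + (phi x)\<^sup>2 - (p x)\<^sup>2 = 2 * phi x * (phi x - p x)"
      by (simp add: power2_eq_square algebra_simps)
    also have "\<dots> \<le> 2 * phi x * \<bar>p x - phi x\<bar>"
      using std_normal_density_pos[of x] by (intro mult_left_mono) auto
    also have "\<dots> \<le> 2 * 1 * \<bar>p x - phi x\<bar>"
      using std_normal_density_le_1[of x] by (intro mult_right_mono) auto
    finally show ?thesis
      by simp
  qed
  have "(\<integral>\<^sup>+x. ennreal ((p x - phi x)\<^sup>2 + (phi x)\<^sup>2) \<partial>lborel)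
      \<le> ennreal 1 * (\<integral>\<^sup>+x. (p x)\<^sup>2 \<partial>lborel) + ennreal 2 * (\<integral>\<^sup>+x. \<bar>p x - phi x\<bar> \<partial>lborel)"
    by (rule nn_integral_le_lincomb2) (use pointwise in auto)
  then show ?thesis
    by (simp add: Lq_pow_1 Lq_pow_2 nn_integral_add)
qed

lemma Lq_pow_1_diff_std_normal_le_Lq_pow_2:
  assumes [measurable]: "p \<in> borel_measurable lborel"
    and "\<And>x. 0 \<le> p x" "(\<integral>\<^sup>+x. ennreal (x\<^sup>2 * p x) \<partial>lborel) \<le> ennreal V" "0 \<le> V"
    and "0 < R" "0 < d"
  shows "Lq_pow 1 (\<lambda>x. p x - phi x)
    \<le> ennreal (1 / (2 * d)) * Lq_pow 2 (\<lambda>x. p x - phi x) + ennreal (d / (2 * phi R) + (V + 1) / R\<^sup>2)"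
proof -
  have "(\<integral>\<^sup>+x. ennreal (x\<^sup>2 * (p x + phi x)) \<partial>lborel)
      = (\<integral>\<^sup>+x. ennreal (x\<^sup>2 * p x) \<partial>lborel) + (\<integral>\<^sup>+x. ennreal (x\<^sup>2 * phi x) \<partial>lborel)"
    using assms(2) by (simp add: distrib_left nn_integral_add)
  also have "\<dots> \<le> ennreal (V + 1)"
    using assms(3,4) by (simp add: nn_integral_std_normal_second_moment)
  finally have moments: "(\<integral>\<^sup>+x. ennreal (x\<^sup>2 * (p x + phi x)) \<partial>lborel) \<le> ennreal (V + 1)" .
  have "Lq_pow 1 (\<lambda>x. p x - phi x) \<le> ennreal (1 / (2 * d)) * Lq_pow 2 (\<lambda>x. p x - phi x)
      + ennreal (d / (2 * phi R)) * (\<integral>\<^sup>+x. phi x \<partial>lborel)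
      + ennreal (1 / R\<^sup>2) * (\<integral>\<^sup>+x. ennreal (x\<^sup>2 * (p x + phi x)) \<partial>lborel)"
    unfolding Lq_pow_1 Lq_pow_2 using assms(2,5,6) abs_diff_std_normal_le std_normal_density_pos
    by (intro nn_integral_le_lincomb3) (auto simp: less_imp_le)
  also have "\<dots> \<le> ennreal (1 / (2 * d)) * Lq_pow 2 (\<lambda>x. p x - phi x)
      + ennreal (d / (2 * phi R)) + ennreal (1 / R\<^sup>2) * ennreal (V + 1)"
    using moments by (simp add: nn_integral_std_normal_density mult_left_mono)
  also have "\<dots> = ennreal (1 / (2 * d)) * Lq_pow 2 (\<lambda>x. p x - phi x)
      + ennreal (d / (2 * phi R) + (V + 1) / R\<^sup>2)"
    using assms(4-6) std_normal_density_pos[of R]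
    by (simp add: ennreal_mult[symmetric] ennreal_plus[symmetric] add.assoc del: ennreal_plus)
  finally show ?thesis .
qed

lemma kl_integral_le_Lq_pow_2:
  assumes [measurable]: "p \<in> borel_measurable lborel"
    and "\<And>x. 0 \<le> p x" "(\<integral>\<^sup>+x. ennreal (\<bar>x\<bar> powr s * p x) \<partial>lborel) \<le> ennreal C" "0 \<le> C"
    and "0 < R" "2 \<le> s"
  shows "(\<integral>\<^sup>+x. kl_term (p x) (phi x) \<partial>lborel)
    \<le> ennreal (1 / phi R + 2) * Lq_pow 2 (\<lambda>x. p x - phi x) + ennreal (3 / R\<^sup>2 + R powr (2 - s) / 2 * C)"
proof -
  have "(\<integral>\<^sup>+x. kl_term (p x) (phi x) \<partial>lborel)
      \<le> ennreal (1 / phi R + 2) * Lq_pow 2 (\<lambda>x. p x - phi x)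
      + ennreal (3 / R\<^sup>2) * (\<integral>\<^sup>+x. ennreal (x\<^sup>2 * phi x) \<partial>lborel)
      + ennreal (R powr (2 - s) / 2) * (\<integral>\<^sup>+x. ennreal (\<bar>x\<bar> powr s * p x) \<partial>lborel)"
    unfolding Lq_pow_2 using assms(2,5,6) kl_term_std_normal_le_split std_normal_density_pos
    by (intro nn_integral_le_lincomb3) (auto simp: less_imp_le)
  also have "\<dots> \<le> ennreal (1 / phi R + 2) * Lq_pow 2 (\<lambda>x. p x - phi x)
      + ennreal (3 / R\<^sup>2) + ennreal (R powr (2 - s) / 2) * ennreal C"
    using assms(3) by (simp add: nn_integral_std_normal_second_moment mult_left_mono)
  also have "\<dots> = ennreal (1 / phi R + 2) * Lq_pow 2 (\<lambda>x. p x - phi x)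
      + ennreal (3 / R\<^sup>2 + R powr (2 - s) / 2 * C)"
    using assms(4,5)
    by (simp add: ennreal_mult[symmetric] ennreal_plus[symmetric] add.assoc del: ennreal_plus)
  finally show ?thesis .
qed

lemma Lq_pow_1_diff_std_normal_le_kl_integral:
  assumes [measurable]: "p \<in> borel_measurable lborel"
    and "\<And>x. 0 \<le> p x" "(\<integral>\<^sup>+x. p x \<partial>lborel) = 1" "0 < e"
  shows "Lq_pow 1 (\<lambda>x. p x - phi x)
    \<le> ennreal (1 / (2 * e)) * (\<integral>\<^sup>+x. kl_term (p x) (phi x) \<partial>lborel) + ennreal (2 * e)"
proof -
  have "\<bar>p x - phi x\<bar> \<le> 1 / (2 * e) * kl_term (p x) (phi x) + e * p x + e * phi x" for x
    using abs_diff_le_kl_term[OF assms(2) std_normal_density_pos assms(4)] by (simp add: algebra_simps)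
  then have "Lq_pow 1 (\<lambda>x. p x - phi x)
      \<le> ennreal (1 / (2 * e)) * (\<integral>\<^sup>+x. kl_term (p x) (phi x) \<partial>lborel)
      + ennreal e * (\<integral>\<^sup>+x. p x \<partial>lborel) + ennreal e * (\<integral>\<^sup>+x. phi x \<partial>lborel)"
    unfolding Lq_pow_1 using assms(2,4) std_normal_density_pos kl_term_nonneg
    by (intro nn_integral_le_lincomb3) (auto simp: less_imp_le)
  also have "\<dots> = ennreal (1 / (2 * e)) * (\<integral>\<^sup>+x. kl_term (p x) (phi x) \<partial>lborel) + ennreal (2 * e)"
    using assms(3,4) by (simp add: nn_integral_std_normal_density add.assoc ennreal_plus[symmetric] del: ennreal_plus)
  finally show ?thesis .
qed

lemma KL_gauss_eq_kl_integral:
  assumes [measurable]: "p \<in> borel_measurable lborel"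
    and "\<And>x. 0 \<le> p x" "(\<integral>\<^sup>+x. p x \<partial>lborel) = 1"
  shows "KL_gauss p = enn2ereal (\<integral>\<^sup>+x. kl_term (p x) (phi x) \<partial>lborel)"
proof -
  have "integrable lborel p"
    using assms by (intro integrableI_nn_integral_finite[where x = 1]) auto
  moreover have "(\<integral>x. p x \<partial>lborel) = 1"
    using assms by (simp add: integral_eq_nn_integral)
  ultimately have diff: "integrable lborel (\<lambda>x. p x - phi x)" "(\<integral>x. p x - phi x \<partial>lborel) = 0"
    by auto
  have kl_nonneg: "0 \<le> kl_term (p x) (phi x)" for x
    using assms(2) std_normal_density_pos by (rule kl_term_nonneg)
  have split: "(\<lambda>x. p x * ln (p x / phi x)) = (\<lambda>x. kl_term (p x) (phi x) + (p x - phi x))"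
    by (simp add: kl_term_def fun_eq_iff)
  have integrable_iff: "integrable lborel (\<lambda>x. p x * ln (p x / phi x))
      \<longleftrightarrow> integrable lborel (\<lambda>x. kl_term (p x) (phi x))"
    unfolding split
  proof
    assume "integrable lborel (\<lambda>x. kl_term (p x) (phi x) + (p x - phi x))"
    from Bochner_Integration.integrable_diff[OF this diff(1)]
    show "integrable lborel (\<lambda>x. kl_term (p x) (phi x))"
      by simp
  qed (use diff(1) in simp)
  show ?thesis
  proof (cases "integrable lborel (\<lambda>x. kl_term (p x) (phi x))")
    case True
    then have "(\<integral>x. p x * ln (p x / phi x) \<partial>lborel) = (\<integral>x. kl_term (p x) (phi x) \<partial>lborel)"
      unfolding split using diff by simp
    moreover have "(\<integral>\<^sup>+x. kl_term (p x) (phi x) \<partial>lborel) = ennreal (\<integral>x. kl_term (p x) (phi x) \<partial>lborel)"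
      using True kl_nonneg by (intro nn_integral_eq_integral) auto
    ultimately show ?thesis
      using True kl_nonneg by (simp add: KL_gauss_def integrable_iff)
  next
    case False
    then have "(\<integral>\<^sup>+x. kl_term (p x) (phi x) \<partial>lborel) = \<infinity>"
      using kl_nonneg by (intro nn_integral_nonneg_infinite) auto
    then show ?thesis
      using False by (simp add: KL_gauss_def integrable_iff)
  qed
qed

section \<open>Convergence\<close>

lemma tendsto_zero_if_dominated:
  fixes X Y :: "'a \<Rightarrow> ennreal"
  assumes Y: "(Y \<longlongrightarrow> 0) F"
    and dom: "\<And>e. 0 < e \<Longrightarrow> \<exists>a b. b < e \<and> (\<forall>\<^sub>F n in F. X n \<le> ennreal a * Y n + ennreal b)"
  shows "(X \<longlongrightarrow> 0) F"
proof (rule order_tendstoI)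
  fix u :: ennreal
  assume "0 < u"
  obtain e where e: "0 < e" "ennreal e \<le> u"
  proof (cases u)
    case (real r)
    then show ?thesis
      using that[of r] \<open>0 < u\<close> by simp
  qed (use that[of 1] in simp)
  obtain a b where "b < e" and X: "\<forall>\<^sub>F n in F. X n \<le> ennreal a * Y n + ennreal b"
    using dom[OF e(1)] by blast
  have "((\<lambda>n. ennreal a * Y n + ennreal b) \<longlongrightarrow> ennreal a * 0 + ennreal b) F"
    by (intro tendsto_add ennreal_tendsto_cmult Y tendsto_const) simp
  moreover have "ennreal b < u"
    using \<open>b < e\<close> e ennreal_lessI[of e b] by simp
  ultimately have "\<forall>\<^sub>F n in F. ennreal a * Y n + ennreal b < u"
    by (simp add: order_tendstoD(2))
  with X show "\<forall>\<^sub>F n in F. X n < u"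
    by eventually_elim (rule le_less_trans)
qed simp

lemma at_top_tendsto_zeroE:
  fixes g :: "real \<Rightarrow> real"
  assumes "(g \<longlongrightarrow> 0) at_top" "0 < e"
  obtains R where "0 < R" "g R < e"
proof -
  have "\<forall>\<^sub>F R in at_top. 0 < R \<and> g R < e"
    using eventually_gt_at_top order_tendstoD(2)[OF assms] by (rule eventually_conj)
  then obtain N where "\<forall>R\<ge>N. 0 < R \<and> g R < e"
    by (auto simp: eventually_at_top_linorder)
  then show ?thesis
    using that[of N] by simp
qed

lemma tendsto_const_div_square_at_top: "((\<lambda>R::real. c / R\<^sup>2) \<longlongrightarrow> 0) at_top"
  by (intro tendsto_divide_0[OF tendsto_const] filterlim_at_top_imp_at_infinity
      filterlim_pow_at_top filterlim_ident) simp

lemma tendsto_Lq_pow_2_if_Lq_bounded: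
  fixes f :: "'a \<Rightarrow> real \<Rightarrow> real"
  assumes "\<And>n. f n \<in> borel_measurable lborel" "2 < q" "\<And>n. Lq_pow q (f n) \<le> ennreal C"
    and "((\<lambda>n. Lq_pow 1 (f n)) \<longlongrightarrow> 0) F"
  shows "((\<lambda>n. Lq_pow 2 (f n)) \<longlongrightarrow> 0) F"
proof (rule tendsto_zero_if_dominated[OF assms(4)])
  fix e :: real
  assume "0 < e"
  have "((\<lambda>M. M powr (2 - q) * max 0 C) \<longlongrightarrow> 0) at_top"
    using assms(2) by (intro tendsto_mult_left_zero tendsto_neg_powr filterlim_ident) simp
  then obtain M where "0 < M" "M powr (2 - q) * max 0 C < e"
    using \<open>0 < e\<close> by (rule at_top_tendsto_zeroE)
  moreover have "Lq_pow 2 (f n) \<le> ennreal M * Lq_pow 1 (f n) + ennreal (M powr (2 - q) * max 0 C)" for n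
    using Lq_pow_2_le_Lq_pow_1_Lq_pow[OF assms(1) \<open>0 < M\<close>] assms(2,3) by (simp add: ennreal_max_0)
  ultimately show "\<exists>a b. b < e \<and> (\<forall>\<^sub>F n in F. Lq_pow 2 (f n) \<le> ennreal a * Lq_pow 1 (f n) + ennreal b)"
    by (blast intro: always_eventually)
qed

lemma tendsto_Lq_pow_2_if_Linf_bounded:
  fixes f :: "'a \<Rightarrow> real \<Rightarrow> real"
  assumes "\<And>n. f n \<in> borel_measurable lborel" "\<And>n. Linf_le (f n) C"
    and "((\<lambda>n. Lq_pow 1 (f n)) \<longlongrightarrow> 0) F"
  shows "((\<lambda>n. Lq_pow 2 (f n)) \<longlongrightarrow> 0) F"
  using assms(3)
proof (rule tendsto_zero_if_dominated)
  fix e :: real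
  assume "0 < e"
  then show "\<exists>a b. b < e \<and> (\<forall>\<^sub>F n in F. Lq_pow 2 (f n) \<le> ennreal a * Lq_pow 1 (f n) + ennreal b)"
    using Lq_pow_2_le_Lq_pow_1_Linf[OF assms(1,2)] by (intro exI[of _ C] exI[of _ 0]) simp
qed

lemma tendsto_Lq_pow_2_diff_std_normal_if_Limsup:
  assumes "\<And>n. p n \<in> borel_measurable lborel"
    and "Limsup F (\<lambda>n. Lq_pow 2 (p n)) \<le> Lq_pow 2 phi"
    and "((\<lambda>n. Lq_pow 1 (\<lambda>x. p n x - phi x)) \<longlongrightarrow> 0) F"
  shows "((\<lambda>n. Lq_pow 2 (\<lambda>x. p n x - phi x)) \<longlongrightarrow> 0) F"
  using assms(3)
proof (rule tendsto_zero_if_dominated)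
  fix e :: real
  assume "0 < e"
  have finite: "Lq_pow 2 phi \<noteq> \<infinity>"
    using Lq_pow_2_std_normal_density_le_1 by (auto simp: top_unique)
  then have "Limsup F (\<lambda>n. Lq_pow 2 (p n)) < Lq_pow 2 phi + ennreal (e / 2)"
    using assms(2) \<open>0 < e\<close> ennreal_add_left_cancel_less[of "Lq_pow 2 phi" 0] by (simp add: le_less_trans)
  then have "\<forall>\<^sub>F n in F. Lq_pow 2 (p n) < Lq_pow 2 phi + ennreal (e / 2)"
    by (rule Limsup_lessD)
  then have "\<forall>\<^sub>F n in F. Lq_pow 2 (\<lambda>x. p n x - phi x) \<le> ennreal 2 * Lq_pow 1 (\<lambda>x. p n x - phi x) + ennreal (e / 2)"
  proof eventually_elim
    case (elim n)
    have "Lq_pow 2 phi + Lq_pow 2 (\<lambda>x. p n x - phi x) \<le> Lq_pow 2 (p n) + 2 * Lq_pow 1 (\<lambda>x. p n x - phi x)"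
      using Lq_pow_2_diff_std_normal_le[OF assms(1)] by (simp add: add.commute)
    also have "\<dots> \<le> Lq_pow 2 phi + (2 * Lq_pow 1 (\<lambda>x. p n x - phi x) + ennreal (e / 2))"
      using elim by (simp add: add_right_mono less_imp_le add_ac)
    finally show ?case
      using finite by (simp add: ennreal_add_left_cancel_le)
  qed
  then show "\<exists>a b. b < e \<and> (\<forall>\<^sub>F n in F. Lq_pow 2 (\<lambda>x. p n x - phi x)
      \<le> ennreal a * Lq_pow 1 (\<lambda>x. p n x - phi x) + ennreal b)"
    using \<open>0 < e\<close> by (intro exI[of _ 2] exI[of _ "e / 2"]) simp
qed

lemma tendsto_Lq_pow_1_diff_std_normal_if_Lq_pow_2:
  assumes "\<And>n. p n \<in> borel_measurable lborel" "\<And>n x. 0 \<le> p n x"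
    and "\<And>n. (\<integral>\<^sup>+x. ennreal (x\<^sup>2 * p n x) \<partial>lborel) \<le> ennreal V"
    and "((\<lambda>n. Lq_pow 2 (\<lambda>x. p n x - phi x)) \<longlongrightarrow> 0) F"
  shows "((\<lambda>n. Lq_pow 1 (\<lambda>x. p n x - phi x)) \<longlongrightarrow> 0) F"
proof (rule tendsto_zero_if_dominated[OF assms(4)])
  fix e :: real
  assume "0 < e"
  obtain R where R: "0 < R" "(max 0 V + 1) / R\<^sup>2 < e / 2"
    using tendsto_const_div_square_at_top half_gt_zero[OF \<open>0 < e\<close>] by (rule at_top_tendsto_zeroE)
  define d where "d = e * phi R / 2"
  have "0 < d" "d / (2 * phi R) = e / 4"
    using \<open>0 < e\<close> std_normal_density_pos[of R] by (simp_all add: d_def)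
  then have "d / (2 * phi R) + (max 0 V + 1) / R\<^sup>2 < e"
    using R(2) \<open>0 < e\<close> by linarith
  moreover have "Lq_pow 1 (\<lambda>x. p n x - phi x) \<le> ennreal (1 / (2 * d)) * Lq_pow 2 (\<lambda>x. p n x - phi x)
      + ennreal (d / (2 * phi R) + (max 0 V + 1) / R\<^sup>2)" for n
    using Lq_pow_1_diff_std_normal_le_Lq_pow_2[OF assms(1,2) _ _ R(1) \<open>0 < d\<close>] assms(3)
    by (simp add: ennreal_max_0)
  ultimately show "\<exists>a b. b < e \<and> (\<forall>\<^sub>F n in F. Lq_pow 1 (\<lambda>x. p n x - phi x)
      \<le> ennreal a * Lq_pow 2 (\<lambda>x. p n x - phi x) + ennreal b)"
    by (blast intro: always_eventually)
qed

lemma tendsto_kl_integral_if_Lq_pow_2: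
  assumes "\<And>n. p n \<in> borel_measurable lborel" "\<And>n x. 0 \<le> p n x" "2 < s"
    and "\<And>n. (\<integral>\<^sup>+x. ennreal (\<bar>x\<bar> powr s * p n x) \<partial>lborel) \<le> ennreal C"
    and "((\<lambda>n. Lq_pow 2 (\<lambda>x. p n x - phi x)) \<longlongrightarrow> 0) F"
  shows "((\<lambda>n. \<integral>\<^sup>+x. kl_term (p n x) (phi x) \<partial>lborel) \<longlongrightarrow> 0) F"
proof (rule tendsto_zero_if_dominated[OF assms(5)])
  fix e :: real
  assume "0 < e"
  have "((\<lambda>R. R powr (2 - s)) \<longlongrightarrow> 0) at_top"
    using assms(3) by (intro tendsto_neg_powr filterlim_ident) simp
  then have "((\<lambda>R. 3 / R\<^sup>2 + R powr (2 - s) / 2 * max 0 C) \<longlongrightarrow> 0 + 0 / 2 * max 0 C) at_top"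
    by (intro tendsto_add tendsto_const_div_square_at_top tendsto_mult tendsto_divide tendsto_const) simp_all
  then have "((\<lambda>R. 3 / R\<^sup>2 + R powr (2 - s) / 2 * max 0 C) \<longlongrightarrow> 0) at_top"
    by simp
  then obtain R where "0 < R" "3 / R\<^sup>2 + R powr (2 - s) / 2 * max 0 C < e"
    using \<open>0 < e\<close> by (rule at_top_tendsto_zeroE)
  moreover have "(\<integral>\<^sup>+x. kl_term (p n x) (phi x) \<partial>lborel)
      \<le> ennreal (1 / phi R + 2) * Lq_pow 2 (\<lambda>x. p n x - phi x)
      + ennreal (3 / R\<^sup>2 + R powr (2 - s) / 2 * max 0 C)" for n
    using kl_integral_le_Lq_pow_2[OF assms(1,2) _ _ \<open>0 < R\<close>] assms(3,4) by (simp add: ennreal_max_0)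
  ultimately show "\<exists>a b. b < e \<and> (\<forall>\<^sub>F n in F. (\<integral>\<^sup>+x. kl_term (p n x) (phi x) \<partial>lborel)
      \<le> ennreal a * Lq_pow 2 (\<lambda>x. p n x - phi x) + ennreal b)"
    by (blast intro: always_eventually)
qed

lemma tendsto_Lq_pow_1_diff_std_normal_if_kl_integral:
  assumes "\<And>n. p n \<in> borel_measurable lborel" "\<And>n x. 0 \<le> p n x"
    and "\<And>n. (\<integral>\<^sup>+x. p n x \<partial>lborel) = 1"
    and "((\<lambda>n. \<integral>\<^sup>+x. kl_term (p n x) (phi x) \<partial>lborel) \<longlongrightarrow> 0) F"
  shows "((\<lambda>n. Lq_pow 1 (\<lambda>x. p n x - phi x)) \<longlongrightarrow> 0) F"
proof (rule tendsto_zero_if_dominated[OF assms(4)])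
  fix e :: real
  assume "0 < e"
  then show "\<exists>a b. b < e \<and> (\<forall>\<^sub>F n in F. Lq_pow 1 (\<lambda>x. p n x - phi x)
      \<le> ennreal a * (\<integral>\<^sup>+x. kl_term (p n x) (phi x) \<partial>lborel) + ennreal b)"
    using Lq_pow_1_diff_std_normal_le_kl_integral[OF assms(1-3), of "e / 4"]
    by (intro exI[of _ "1 / (2 * (e / 4))"] exI[of _ "2 * (e / 4)"]) simp
qed

theorem corollary2p5:
  fixes p :: "nat \<Rightarrow> real \<Rightarrow> real"
  assumes dens: "\<And>n. is_density (p n)"
    and mean: "\<And>n. integrable lborel (\<lambda>x. x * p n x) \<and> (\<integral>x. x * p n x \<partial>lborel) = 0"
    and var: "\<And>n. integrable lborel (\<lambda>x. x\<^sup>2 * p n x) \<and> (\<integral>x. x\<^sup>2 * p n x \<partial>lborel) = 1"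
    and moment: "\<exists>s>2. \<exists>C::real. \<forall>n. (\<integral>\<^sup>+ x. ennreal (\<bar>x\<bar> powr s * p n x) \<partial>lborel) \<le> ennreal C"
    and cond: "(\<exists>q>2. \<exists>C::real. \<forall>n. Lq_pow q (\<lambda>x. p n x - phi x) \<le> ennreal C)
             \<or> (\<exists>C::real. \<forall>n. Linf_le (\<lambda>x. p n x - phi x) C)
             \<or> limsup (\<lambda>n. Lq_pow 2 (p n)) \<le> Lq_pow 2 phi"
  shows "((\<lambda>n. Lq_pow 1 (\<lambda>x. p n x - phi x)) \<longlonglongrightarrow> 0 \<longleftrightarrow>
          (\<lambda>n. Lq_pow 2 (\<lambda>x. p n x - phi x)) \<longlonglongrightarrow> 0)
       \<and> ((\<lambda>n. Lq_pow 2 (\<lambda>x. p n x - phi x)) \<longlonglongrightarrow> 0 \<longleftrightarrow>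
          (\<lambda>n. KL_gauss (p n)) \<longlonglongrightarrow> 0)"
proof -
  have meas: "\<And>n. p n \<in> borel_measurable lborel" and nonneg: "\<And>n x. 0 \<le> p n x"
    and total: "\<And>n. (\<integral>\<^sup>+x. p n x \<partial>lborel) = 1"
    using dens unfolding is_density_def by auto
  have second_moment: "(\<integral>\<^sup>+x. ennreal (x\<^sup>2 * p n x) \<partial>lborel) \<le> ennreal 1" for n
    using var[of n] nonneg by (subst nn_integral_eq_integral) auto
  obtain s C where s: "2 < s" and C: "\<And>n. (\<integral>\<^sup>+x. ennreal (\<bar>x\<bar> powr s * p n x) \<partial>lborel) \<le> ennreal C"
    using moment by blast
  have diff_meas: "\<And>n. (\<lambda>x. p n x - phi x) \<in> borel_measurable lborel"
    using meas by measurable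
  have KL: "(\<lambda>n. KL_gauss (p n)) \<longlonglongrightarrow> 0
      \<longleftrightarrow> (\<lambda>n. \<integral>\<^sup>+x. kl_term (p n x) (phi x) \<partial>lborel) \<longlonglongrightarrow> 0"
    using KL_gauss_eq_kl_integral[OF meas nonneg total] tendsto_enn2ereal_iff[of _ 0]
    by (simp add: zero_ennreal.rep_eq)
  have "(\<lambda>n. Lq_pow 1 (\<lambda>x. p n x - phi x)) \<longlonglongrightarrow> 0 \<Longrightarrow> (\<lambda>n. Lq_pow 2 (\<lambda>x. p n x - phi x)) \<longlonglongrightarrow> 0"
    using cond tendsto_Lq_pow_2_if_Lq_bounded[where f = "\<lambda>n x. p n x - phi x", OF diff_meas]
      tendsto_Lq_pow_2_if_Linf_bounded[where f = "\<lambda>n x. p n x - phi x", OF diff_meas]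
      tendsto_Lq_pow_2_diff_std_normal_if_Limsup[where p = p, OF meas]
    by blast
  then show ?thesis
    unfolding KL
    using tendsto_Lq_pow_1_diff_std_normal_if_Lq_pow_2[where p = p, OF meas nonneg second_moment]
      tendsto_kl_integral_if_Lq_pow_2[where p = p, OF meas nonneg s C]
      tendsto_Lq_pow_1_diff_std_normal_if_kl_integral[where p = p, OF meas nonneg total]
    by blast
qed

end
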